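(* Let $k\in[n-1]$, $w\in S_n^{k\searrow}$, and suppose there is an increasing $k$-chain from some $u$ to $w$. Suppose some step $u'\lessdot_k w'$ of this chain exchanges the values $a<b$, and that $b$ is at position $i$ in $w'$. Then: (1) $b$ is not among $u(1),\dots,u(k)$; (2) for every $c$ with $a<c<b$, $u^{-1}(c)<i$; (3) for every $c$ with $a<c<b$, the value $c$ is not exchanged by any step of the chain.
   Context: Permutations in one-line notation; $wt_{i,j}$ is $w$ with positions $i<j$ swapped; $\ell$ the number of inversions. $u\lessdot w$ iff $w=ut_{i,j}$, $i<j$, $\ell(w)=\ell(u)+1$; $u\lessdot_k w$ iff moreover $i\le k<j$. A $k$-chain $v_1\lessdot_k\cdots\lessdot_k v_d$ is increasing if the smaller of the two values exchanged at each step strictly increases along the chain. $S_n^{k\searrow}=\{v\in S_n: v(k+1)>\dots>v(n)\}$. *)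

theory Defs
  imports "HOL-Combinatorics.Combinatorics"
begin

text \<open>Permutations of [n] = {1..n} in one-line notation are functions
  nat => nat that permute {1..n}.  w t_{i,j} is w composed with the
  transposition of positions i and j.\<close>

definition ninv :: "nat \<Rightarrow> (nat \<Rightarrow> nat) \<Rightarrow> nat" where
  "ninv n w = card {(p, q). 1 \<le> p \<and> p < q \<and> q \<le> n \<and> w q < w p}"

definition kstep :: "nat \<Rightarrow> nat \<Rightarrow> (nat \<Rightarrow> nat) \<Rightarrow> (nat \<Rightarrow> nat) \<Rightarrow> nat \<Rightarrow> nat \<Rightarrow> bool" where
  "kstep n k u w x y \<longleftrightarrow> (\<exists>i j. 1 \<le> i \<and> i \<le> k \<and> k < j \<and> j \<le> n \<and>
      w = u \<circ> Transposition.transpose i j \<and> ninv n w = ninv n u + 1 \<and>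
      x = u i \<and> y = u j)"

definition kcover :: "nat \<Rightarrow> nat \<Rightarrow> (nat \<Rightarrow> nat) \<Rightarrow> (nat \<Rightarrow> nat) \<Rightarrow> bool" where
  "kcover n k u w \<longleftrightarrow> (\<exists>x y. kstep n k u w x y)"

definition inc_kchain :: "nat \<Rightarrow> nat \<Rightarrow> (nat \<Rightarrow> nat) list \<Rightarrow> bool" where
  "inc_kchain n k vs \<longleftrightarrow> vs \<noteq> [] \<and> (\<forall>v\<in>set vs. v permutes {1..n}) \<and>
     (\<forall>m. Suc m < length vs \<longrightarrow> kcover n k (vs ! m) (vs ! Suc m)) \<and>
     (\<forall>m m' x y x' y'. m < m' \<and> Suc m' < length vs \<and>
        kstep n k (vs ! m) (vs ! Suc m) x y \<and> kstep n k (vs ! m') (vs ! Suc m') x' y'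
        \<longrightarrow> min x y < min x' y')"

definition Sdown :: "nat \<Rightarrow> nat \<Rightarrow> (nat \<Rightarrow> nat) set" where
  "Sdown n k = {v. v permutes {1..n} \<and> (\<forall>p q. k < p \<and> p < q \<and> q \<le> n \<longrightarrow> v q < v p)}"

end

theory Submission
  imports Defs
begin

text \<open>Along a k-chain the value at a position \<open>\<le> k\<close> can only grow, and it leaves its position
  only as the smaller exchanged value. The smaller value a of step m lands at a position
  \<open>Q > k\<close> and, being below all later smaller values, stays there; since the chain ends in
  \<open>S\<^sub>n\<^sup>k\<^sup>\<searrow>\<close>, every value c strictly between a and b must then sit left of the position of
  a at step m. Going backwards, an earlier exchange bringing c there would have left an
  even smaller value at that position, contradicting the increasing condition. Going
  forwards, a later exchange of c would pair it with a value that again lies strictly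
  between a and b, hence also sits at a position \<open>\<le> k\<close> and cannot be the larger partner.\<close>

definition inversions :: "nat \<Rightarrow> (nat \<Rightarrow> nat) \<Rightarrow> (nat \<times> nat) set" where
  "inversions n w = {(p, q). 1 \<le> p \<and> p < q \<and> q \<le> n \<and> w q < w p}"

lemma finite_inversions: "finite (inversions n w)"
  by (rule finite_subset[of _ "{1..n} \<times> {1..n}"]) (auto simp: inversions_def)

lemma ninv_eq_card_inversions: "ninv n w = card (inversions n w)"
  by (simp add: ninv_def inversions_def)

lemma ninv_transpose_ge:
  fixes u :: "nat \<Rightarrow> nat"
  assumes "1 \<le> p" "p < q" "q \<le> n" "u p < u q"
  shows "ninv n u + 1 + 2 * card {r. p < r \<and> r < q \<and> u p < u r \<and> u r < u q}
    \<le> ninv n (u \<circ> Transposition.transpose p q)"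
proof -
  define \<tau> where "\<tau> = Transposition.transpose p q"
  define R where "R = {r. p < r \<and> r < q \<and> u p < u r \<and> u r < u q}"
  define E where "E = insert (p, q) (Pair p ` R \<union> (\<lambda>r. (r, q)) ` R)"
  \<comment> \<open>\<psi> transports an inversion along \<tau> if \<tau> keeps its orientation and fixes it otherwise;
    its image misses the new inversions collected in E\<close>
  define \<psi> where "\<psi> = (\<lambda>(r, s). if \<tau> r < \<tau> s then (\<tau> r, \<tau> s) else (r, s))"
  have "inj_on \<psi> (inversions n u)"
    by (rule inj_on_inverseI[where g = \<psi>]) (auto simp: \<psi>_def \<tau>_def inversions_def)
  moreover have "\<psi> e \<in> inversions n (u \<circ> \<tau>) - E" if inv: "e \<in> inversions n u" for e
  proof -
    obtain r s where e: "e = (r, s)" "1 \<le> r" "r < s" "s \<le> n" "u s < u r"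
      using inv by (cases e) (auto simp: inversions_def)
    show ?thesis
      using assms e by (cases "\<tau> r < \<tau> s")
        (auto simp: \<psi>_def \<tau>_def E_def R_def inversions_def transpose_def)
  qed
  ultimately have inj_bound: "card (inversions n u) \<le> card (inversions n (u \<circ> \<tau>) - E)"
    by (intro card_inj_on_le) (auto simp: finite_inversions)
  have E_sub: "E \<subseteq> inversions n (u \<circ> \<tau>)"
    using assms by (auto simp: \<tau>_def E_def R_def inversions_def)
  have card_E: "card E = 1 + 2 * card R"
  proof -
    have "finite R"
      by (rule finite_subset[of _ "{..<q}"]) (auto simp: R_def)
    then have "card (Pair p ` R \<union> (\<lambda>r. (r, q)) ` R) = 2 * card R"
      by (subst card_Un_disjoint) (auto simp: R_def card_image inj_on_def)
    moreover have "(p, q) \<notin> Pair p ` R \<union> (\<lambda>r. (r, q)) ` R"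
      by (auto simp: R_def)
    ultimately show ?thesis
      using \<open>finite R\<close> by (simp add: E_def)
  qed
  have "card (inversions n (u \<circ> \<tau>) - E) = card (inversions n (u \<circ> \<tau>)) - card E"
    using E_sub by (simp add: card_Diff_subset finite_subset[OF _ finite_inversions])
  moreover have "card E \<le> card (inversions n (u \<circ> \<tau>))"
    using E_sub by (rule card_mono[OF finite_inversions])
  ultimately show ?thesis
    using inj_bound card_E by (simp add: ninv_eq_card_inversions flip: \<tau>_def R_def)
qed

lemma cover_transpose_ascent:
  fixes u :: "nat \<Rightarrow> nat"
  assumes "1 \<le> p" "p < q" "q \<le> n" "u p \<noteq> u q"
    and cover: "ninv n (u \<circ> Transposition.transpose p q) = ninv n u + 1"
  shows "u p < u q"
proof (rule ccontr)
  assume "\<not> u p < u q"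
  with assms(4) have ascent: "(u \<circ> Transposition.transpose p q) p < (u \<circ> Transposition.transpose p q) q"
    by simp
  have "ninv n (u \<circ> Transposition.transpose p q) + 1
      \<le> ninv n (u \<circ> Transposition.transpose p q \<circ> Transposition.transpose p q)"
    using ninv_transpose_ge[OF assms(1-3) ascent] by linarith
  also have "u \<circ> Transposition.transpose p q \<circ> Transposition.transpose p q = u"
    by (simp add: fun_eq_iff)
  finally show False
    using cover by linarith
qed

lemma cover_transpose_gap:
  fixes u :: "nat \<Rightarrow> nat"
  assumes "1 \<le> p" "p < q" "q \<le> n" "u p < u q"
    and cover: "ninv n (u \<circ> Transposition.transpose p q) = ninv n u + 1"
    and "p < r" "r < q"
  shows "\<not> (u p < u r \<and> u r < u q)"
proof -
  have "finite {r. p < r \<and> r < q \<and> u p < u r \<and> u r < u q}"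
    by (rule finite_subset[of _ "{..<q}"]) auto
  with ninv_transpose_ge[OF assms(1-4)] cover have "{r. p < r \<and> r < q \<and> u p < u r \<and> u r < u q} = {}"
    by simp
  with assms(6,7) show ?thesis by blast
qed

lemma kstep_exchanged_values:
  fixes u :: "nat \<Rightarrow> nat"
  assumes "inj u" and "kstep n k u (u \<circ> Transposition.transpose p q) x y" and "p \<le> k" "k < q"
  shows "x = u p \<and> y = u q"
proof -
  obtain i j where ij: "i \<le> k" "k < j" "x = u i" "y = u j"
    and "u \<circ> Transposition.transpose p q = u \<circ> Transposition.transpose i j"
    using assms(2) unfolding kstep_def by blast
  then have "Transposition.transpose p q = Transposition.transpose i j"
    using \<open>inj u\<close> by (simp add: fun_eq_iff inj_eq)
  then have "Transposition.transpose p q i = j"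
    by (metis transpose_apply_first)
  with ij assms(3,4) have "i = p \<and> j = q"
    by (auto simp: transpose_def split: if_splits)
  with ij show ?thesis by simp
qed

lemma kcover_iff:
  "kcover n k u w \<longleftrightarrow> (\<exists>p q. 1 \<le> p \<and> p \<le> k \<and> k < q \<and> q \<le> n \<and>
      w = u \<circ> Transposition.transpose p q \<and> ninv n w = ninv n u + 1)"
  unfolding kcover_def kstep_def by blast

text \<open>An increasing k-chain \<open>V 0, \<dots>, V (L - 1)\<close> ending in \<open>S\<^sub>n\<^sup>k\<^sup>\<searrow>\<close>, whose step t exchanges the
  positions \<open>P t \<le> k < Q t\<close>; \<open>ascent\<close> and \<open>gap\<close> are what covering means for a transposition.\<close>

locale increasing_exchange_chain =
  fixes n k L :: nat and V :: "nat \<Rightarrow> nat \<Rightarrow> nat" and P Q :: "nat \<Rightarrow> nat"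
  assumes permutes: "t < L \<Longrightarrow> V t permutes {1..n}"
    and positions: "Suc t < L \<Longrightarrow> 1 \<le> P t \<and> P t \<le> k \<and> k < Q t \<and> Q t \<le> n"
    and exchange: "Suc t < L \<Longrightarrow> V (Suc t) = V t \<circ> Transposition.transpose (P t) (Q t)"
    and ascent: "Suc t < L \<Longrightarrow> V t (P t) < V t (Q t)"
    and gap: "Suc t < L \<Longrightarrow> P t < r \<Longrightarrow> r < Q t \<Longrightarrow> \<not> (V t (P t) < V t r \<and> V t r < V t (Q t))"
    and small_increasing: "t < t' \<Longrightarrow> Suc t' < L \<Longrightarrow> V t (P t) < V t' (P t')"
    and final_decreasing: "k < p \<Longrightarrow> p < q \<Longrightarrow> q \<le> n \<Longrightarrow> V (L - 1) q < V (L - 1) p"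
begin

lemma V_eq_iff: "t < L \<Longrightarrow> V t r = V t s \<longleftrightarrow> r = s"
  using permutes_inj[OF permutes] by (meson injD)

lemma V_Suc_P: "Suc t < L \<Longrightarrow> V (Suc t) (P t) = V t (Q t)"
  and V_Suc_Q: "Suc t < L \<Longrightarrow> V (Suc t) (Q t) = V t (P t)"
  and V_Suc_other: "Suc t < L \<Longrightarrow> r \<noteq> P t \<Longrightarrow> r \<noteq> Q t \<Longrightarrow> V (Suc t) r = V t r"
  by (simp_all add: exchange)

lemma fixed_value_not_exchanged:
  assumes "Suc t < L" "V (Suc t) s = V t s"
  shows "V t (P t) \<noteq> V t s \<and> V t (Q t) \<noteq> V t s"
  using assms ascent[OF assms(1)] V_Suc_P V_Suc_Q V_eq_iff[of t] by (metis Suc_lessD less_irrefl)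

lemma position_fixed_while_not_exchanged:
  assumes "t1 \<le> t2" "t2 < L" "V t1 s = c"
    and not_exchanged: "\<And>t. t1 \<le> t \<Longrightarrow> t < t2 \<Longrightarrow> V t (P t) \<noteq> c \<and> V t (Q t) \<noteq> c"
  shows "V t2 s = c"
  using assms(1,2)
proof (induction t2 rule: dec_induct)
  case base
  show ?case using assms(3) .
next
  case (step t)
  then have "V t s = c" by simp
  with not_exchanged[OF step.hyps] have "s \<noteq> P t" "s \<noteq> Q t" by auto
  with \<open>V t s = c\<close> show ?case
    using V_Suc_other step.prems by simp
qed

lemma top_value_mono:
  assumes "r \<le> k" "t1 \<le> t2" "t2 < L"
  shows "V t1 r \<le> V t2 r"
  using assms(2,3)
proof (induction t2 rule: dec_induct)
  case (step t)
  have "V t r \<le> V (Suc t) r"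
    using assms(1) positions[OF step.prems] ascent[OF step.prems] V_Suc_P[OF step.prems]
      V_Suc_other[OF step.prems] by (cases "r = P t") auto
  with step show ?case by simp
qed simp

lemma changed_top_value_exchanged:
  assumes "r \<le> k" "t1 \<le> t2" "t2 < L" "V t2 r \<noteq> V t1 r"
  shows "\<exists>t. t1 \<le> t \<and> t < t2 \<and> V t (P t) = V t1 r"
  using assms(2-4)
proof (induction t2 rule: dec_induct)
  case (step t)
  show ?case
  proof (cases "V t r = V t1 r")
    case True
    with step.prems have "V (Suc t) r \<noteq> V t r" by simp
    with assms(1) positions[OF step.prems(1)] V_Suc_other[OF step.prems(1)] have "r = P t"
      by fastforce
    with True step.hyps show ?thesis by auto
  next
    case False
    with step show ?thesis by (auto intro: less_SucI)
  qed
qed simp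

lemma large_value_not_initially_top:
  assumes "Suc m < L" "r \<le> k"
  shows "V 0 r \<noteq> V m (Q m)"
proof
  assume initially: "V 0 r = V m (Q m)"
  have "V m r \<noteq> V m (Q m)"
    using V_eq_iff[of m] positions[OF assms(1)] assms by auto
  with initially obtain t where "t < m" "V t (P t) = V m (Q m)"
    using changed_top_value_exchanged[OF assms(2), of 0 m] assms(1) by auto
  with small_increasing[of t m] ascent[of m] assms(1) show False by simp
qed

lemma bottom_value_stays_above:
  assumes "m < t1" "t1 \<le> t2" "t2 < L" "k < q" "V m (P m) < V t1 q"
  shows "V m (P m) < V t2 q"
  using assms(2,3)
proof (induction t2 rule: dec_induct)
  case base
  show ?case using assms(5) .
next
  case (step t)
  have "q \<noteq> P t" using positions[OF step.prems] assms(4) by simp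
  moreover have "V m (P m) < V t (P t)"
    using small_increasing[of m t] assms(1) step by simp
  ultimately show ?case
    using step V_Suc_Q[OF step.prems] V_Suc_other[OF step.prems] by (cases "q = Q t") auto
qed

lemma small_value_settles:
  assumes "Suc m \<le> t" "t < L"
  shows "V t (Q m) = V m (P m)"
proof (rule position_fixed_while_not_exchanged[OF assms])
  show "V (Suc m) (Q m) = V m (P m)"
    using V_Suc_Q assms by simp
  fix t' assume "Suc m \<le> t'" "t' < t"
  with assms have "V m (P m) < V t' (P t')" "V t' (P t') < V t' (Q t')"
    using small_increasing ascent by simp_all
  then show "V t' (P t') \<noteq> V m (P m) \<and> V t' (Q t') \<noteq> V m (P m)" by simp
qed

lemma between_value_left:
  assumes m: "Suc m < L" and c: "V m (P m) < c" "c < V m (Q m)" and s: "V m s = c"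
  shows "s < P m"
proof -
  have pos: "1 \<le> P m" "P m \<le> k" "k < Q m" "Q m \<le> n" using positions[OF m] by auto
  have "s \<noteq> P m" "s \<noteq> Q m" using c s by auto
  moreover have "\<not> (P m < s \<and> s < Q m)" using gap[OF m] c s by blast
  moreover have "\<not> Q m < s"
  proof
    assume "Q m < s"
    have "V m (Q m) \<le> n"
      using permutes_in_image[OF permutes, of m "Q m"] m pos by simp
    then have "s \<le> n"
      using permutes_not_in[OF permutes, of m s] m c s by fastforce
    have "V (Suc m) s = c"
      using V_Suc_other[OF m] s \<open>s \<noteq> P m\<close> \<open>s \<noteq> Q m\<close> by simp
    then have "V m (P m) < V (L - 1) s"
      using bottom_value_stays_above[of m "Suc m" "L - 1" s] m pos \<open>Q m < s\<close> c by simp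
    moreover have "V (L - 1) (Q m) = V m (P m)"
      using small_value_settles m by simp
    moreover have "V (L - 1) s < V (L - 1) (Q m)"
      using final_decreasing pos \<open>Q m < s\<close> \<open>s \<le> n\<close> by simp
    ultimately show False by simp
  qed
  ultimately show ?thesis by linarith
qed

lemma between_value_fixed_before:
  assumes m: "Suc m < L" and c: "V m (P m) < c" "c < V m (Q m)"
    and s: "V m s = c" "s < P m" and "t \<le> m"
  shows "V t s = c"
  using \<open>t \<le> m\<close>
proof (induction t rule: inc_induct)
  case base
  show ?case using s(1) .
next
  case (step t)
  have t: "Suc t < L" using step.hyps m by simp
  show ?case
  proof (rule ccontr)
    assume "V t s \<noteq> c"
    have pos: "P t \<le> k" "k < Q t" "P m \<le> k" "k < Q m" using positions t m by auto
    have "s = P t"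
      using V_Suc_other[OF t, of s] step.IH \<open>V t s \<noteq> c\<close> s(2) pos by fastforce
    then have "V t (Q t) = c"
      using V_Suc_P[OF t] step.IH by simp
    have "V t (P t) < V m (P m)"
      using small_increasing step.hyps m by simp
    \<comment> \<open>the value at position P m lies outside the gap of step t, hence below its small value \<dots>\<close>
    have "V t (P m) \<le> V m (P m)"
      using top_value_mono[of "P m" t m] pos step.hyps m by simp
    moreover have "V t (P m) \<noteq> V t (P t)"
      using V_eq_iff[of t] t \<open>s = P t\<close> s(2) by simp
    moreover have "\<not> (V t (P t) < V t (P m) \<and> V t (P m) < V t (Q t))"
      using gap[OF t] \<open>s = P t\<close> s(2) pos by simp
    ultimately have below: "V t (P m) < V t (P t)"
      using \<open>V t (Q t) = c\<close> c by linarith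
    \<comment> \<open>\<dots> so it must later leave position P m as a small value smaller than V t (P t)\<close>
    have "V (Suc t) (P m) = V t (P m)"
      using V_Suc_other[OF t] \<open>s = P t\<close> s(2) pos by simp
    with below \<open>V t (P t) < V m (P m)\<close> obtain t' where "Suc t \<le> t'" "t' < m"
        "V t' (P t') = V t (P m)"
      using changed_top_value_exchanged[of "P m" "Suc t" m] pos step.hyps m by fastforce
    with below small_increasing[of t t'] m show False by simp
  qed
qed

lemma between_value_position:
  assumes "Suc m < L" "V m (P m) < c" "c < V m (Q m)"
  obtains s where "s < P m" "\<And>t. t \<le> m \<Longrightarrow> V t s = c"
proof
  have "V m (inv (V m) c) = c"
    using permutes_inverses(1)[OF permutes] assms(1) by simp
  then show "inv (V m) c < P m"
    by (rule between_value_left[OF assms])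
  then show "V t (inv (V m) c) = c" if "t \<le> m" for t
    by (rule between_value_fixed_before[OF assms \<open>V m (inv (V m) c) = c\<close> _ that])
qed

lemma later_exchange_below_large_value:
  assumes m: "Suc m < L" and "m < t" and t: "Suc t < L" and small: "V t (P t) < V m (Q m)"
  shows "V t (Q t) < V m (Q m)"
proof -
  have pos: "P m \<le> k" "k < Q m" "P t \<le> k" "k < Q t" using positions m t by auto
  have "V t (Q t) \<noteq> V m (Q m)"
  proof
    assume large: "V t (Q t) = V m (Q m)"
    have "V t (P m) \<noteq> V (Suc m) (P m)"
      using V_Suc_P[OF m] large V_eq_iff[of t "P m" "Q t"] t pos by simp
    then obtain t' where "t' < t" "V t' (P t') = V m (Q m)"
      using changed_top_value_exchanged[of "P m" "Suc m" t] V_Suc_P[OF m] pos \<open>m < t\<close> t by fastforce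
    with small small_increasing[of t' t] t show False by simp
  qed
  moreover have "\<not> V m (Q m) < V t (Q t)"
  proof
    assume "V m (Q m) < V t (Q t)"
    with small obtain s where "\<And>t'. t' \<le> t \<Longrightarrow> V t' s = V m (Q m)"
      using between_value_position[OF t] by blast
    then have "V m s = V m (Q m)" "V (Suc m) s = V (Suc m) (P m)"
      using \<open>m < t\<close> V_Suc_P[OF m] by auto
    then show False
      using V_eq_iff[of m] V_eq_iff[of "Suc m"] m pos by auto
  qed
  ultimately show ?thesis by simp
qed

lemma between_value_never_exchanged:
  assumes m: "Suc m < L"
  shows "Suc t < L \<Longrightarrow> V m (P m) < c \<Longrightarrow> c < V m (Q m) \<Longrightarrow> V t (P t) \<noteq> c \<and> V t (Q t) \<noteq> c"
proof (induction t arbitrary: c rule: less_induct)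
  case (less t)
  have pos: "P m \<le> k" "P t \<le> k" "k < Q t" using positions m less.prems(1) by auto
  obtain s where s: "s < P m" "\<And>t'. t' \<le> m \<Longrightarrow> V t' s = c"
    using between_value_position[OF m less.prems(2,3)] by blast
  consider "t < m" | "t = m" | "m < t" by linarith
  then show ?case
  proof cases
    case 1
    then show ?thesis
      using fixed_value_not_exchanged[OF less.prems(1), of s] s(2) by simp
  next
    case 2
    then show ?thesis using less.prems by simp
  next
    case 3
    have stays: "V t s' = d" if "V m (P m) < d" "d < V m (Q m)" "V m s' = d" for d s'
      using position_fixed_while_not_exchanged[of m t s' d] less.IH[of _ d] that \<open>m < t\<close> less.prems(1)
      by simp
    have "V t (Q t) \<noteq> c"
      using stays[OF less.prems(2,3) s(2)] V_eq_iff[of t] less.prems(1) s(1) pos by auto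
    moreover have "V t (P t) \<noteq> c"
    proof
      assume "V t (P t) = c"
      \<comment> \<open>then the partner value also lies strictly between the values exchanged at step m \<dots>\<close>
      then have "V m (P m) < V t (Q t)" "V t (Q t) < V m (Q m)"
        using ascent less.prems later_exchange_below_large_value[OF m 3] by fastforce+
      \<comment> \<open>\<dots> so it still sits at a position left of P m, not at Q t > k\<close>
      then obtain s' where "s' < P m" "V t s' = V t (Q t)"
        using between_value_position[OF m] stays by (metis order_refl)
      then show False
        using V_eq_iff[of t] less.prems(1) pos by auto
    qed
    ultimately show ?thesis by simp
  qed
qed

end

lemma inc_kchain_exchange_positions:
  assumes chain: "inc_kchain n k vs" and final: "last vs \<in> Sdown n k"
  obtains P Q where "increasing_exchange_chain n k (length vs) ((!) vs) P Q"
    and "\<And>t x y. Suc t < length vs \<Longrightarrow> kstep n k (vs ! t) (vs ! Suc t) x y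
      \<Longrightarrow> x = (vs ! t) (P t) \<and> y = (vs ! t) (Q t)"
proof -
  let ?L = "length vs"
  have permutes: "vs ! t permutes {1..n}" if "t < ?L" for t
    using chain that unfolding inc_kchain_def by simp
  have "\<forall>t. Suc t < ?L \<longrightarrow> (\<exists>p q. 1 \<le> p \<and> p \<le> k \<and> k < q \<and> q \<le> n \<and>
      vs ! Suc t = vs ! t \<circ> Transposition.transpose p q \<and> ninv n (vs ! Suc t) = ninv n (vs ! t) + 1)"
    using chain unfolding inc_kchain_def kcover_iff by blast
  then obtain P Q where
      positions: "\<And>t. Suc t < ?L \<Longrightarrow> 1 \<le> P t \<and> P t \<le> k \<and> k < Q t \<and> Q t \<le> n"
    and exchange: "\<And>t. Suc t < ?L \<Longrightarrow> vs ! Suc t = vs ! t \<circ> Transposition.transpose (P t) (Q t)"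
    and cover: "\<And>t. Suc t < ?L
      \<Longrightarrow> ninv n (vs ! t \<circ> Transposition.transpose (P t) (Q t)) = ninv n (vs ! t) + 1"
    by metis
  have inj: "inj (vs ! t)" if "t < ?L" for t
    using permutes_inj[OF permutes[OF that]] .
  have kstep: "kstep n k (vs ! t) (vs ! Suc t) ((vs ! t) (P t)) ((vs ! t) (Q t))" if "Suc t < ?L" for t
    using positions[OF that] exchange[OF that] cover[OF that] unfolding kstep_def by auto
  have exchanged: "x = (vs ! t) (P t) \<and> y = (vs ! t) (Q t)"
    if "Suc t < ?L" "kstep n k (vs ! t) (vs ! Suc t) x y" for t x y
    using kstep_exchanged_values[OF inj] positions[OF that(1)] exchange[OF that(1)] that by simp
  have ascent: "(vs ! t) (P t) < (vs ! t) (Q t)" if "Suc t < ?L" for t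
    using positions[OF that] inj[of t] that
    by (intro cover_transpose_ascent[OF _ _ _ _ cover[OF that]]) (auto simp: inj_eq)
  have "increasing_exchange_chain n k ?L ((!) vs) P Q"
  proof
    show "vs ! t permutes {1..n}" if "t < ?L" for t
      using permutes that .
    show "1 \<le> P t \<and> P t \<le> k \<and> k < Q t \<and> Q t \<le> n"
      and "vs ! Suc t = vs ! t \<circ> Transposition.transpose (P t) (Q t)" if "Suc t < ?L" for t
      using positions[OF that] exchange[OF that] by simp_all
    show "(vs ! t) (P t) < (vs ! t) (Q t)" if "Suc t < ?L" for t
      using ascent that .
    show "\<not> ((vs ! t) (P t) < (vs ! t) r \<and> (vs ! t) r < (vs ! t) (Q t))"
      if "Suc t < ?L" "P t < r" "r < Q t" for t r
      using cover_transpose_gap[OF _ _ _ ascent cover] positions that by simp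
    show "(vs ! t) (P t) < (vs ! t') (P t')" if "t < t'" "Suc t' < ?L" for t t'
      using chain that kstep[of t] kstep[of t'] ascent[of t] ascent[of t']
      unfolding inc_kchain_def by fastforce
    show "(vs ! (?L - 1)) q < (vs ! (?L - 1)) p" if "k < p" "p < q" "q \<le> n" for p q
      using final that chain unfolding Sdown_def inc_kchain_def by (simp add: last_conv_nth)
  qed
  with exchanged show ?thesis using that by blast
qed

theorem lemma3p14:
  fixes n k m i a b x y :: nat and u w :: "nat \<Rightarrow> nat" and vs :: "(nat \<Rightarrow> nat) list"
  assumes "1 \<le> k" and "k \<le> n - 1"
    and "w \<in> Sdown n k"
    and "inc_kchain n k vs" and "hd vs = u" and "last vs = w"
    and "Suc m < length vs"
    and "kstep n k (vs ! m) (vs ! Suc m) x y"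
    and "{a, b} = {x, y}" and "a < b"
    and "1 \<le> i" and "i \<le> n" and "(vs ! Suc m) i = b"
  shows "b \<notin> u ` {1..k}
    \<and> (\<forall>c. a < c \<and> c < b \<longrightarrow> inv u c < i)
    \<and> (\<forall>c. a < c \<and> c < b \<longrightarrow>
           (\<forall>m' x' y'. Suc m' < length vs \<and> kstep n k (vs ! m') (vs ! Suc m') x' y'
              \<longrightarrow> c \<noteq> x' \<and> c \<noteq> y'))"
proof -
  note m = \<open>Suc m < length vs\<close>
  obtain P Q where chain: "increasing_exchange_chain n k (length vs) ((!) vs) P Q"
    and exchanged: "\<And>t x y. Suc t < length vs \<Longrightarrow> kstep n k (vs ! t) (vs ! Suc t) x y
      \<Longrightarrow> x = (vs ! t) (P t) \<and> y = (vs ! t) (Q t)"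
    using inc_kchain_exchange_positions[OF assms(4)] assms(3,6) by blast
  interpret increasing_exchange_chain n k "length vs" "(!) vs" P Q
    by (rule chain)
  have u: "u = vs ! 0"
    using assms(5) m by (metis hd_conv_nth list.size(3) not_less_zero)
  have ab: "a = (vs ! m) (P m)" "b = (vs ! m) (Q m)"
    using exchanged[OF m assms(8)] assms(9,10) ascent[OF m] by (auto simp: doubleton_eq_iff)
  have i: "i = P m"
    using assms(13) ab V_Suc_P[OF m] V_eq_iff[of "Suc m" i "P m"] m by simp
  have "b \<notin> u ` {1..k}"
  proof
    assume "b \<in> u ` {1..k}"
    then obtain r where "r \<le> k" "(vs ! 0) r = (vs ! m) (Q m)"
      unfolding u ab by auto
    with large_value_not_initially_top[OF m] show False by blast
  qed
  moreover have "inv u c < i" if c: "a < c" "c < b" for c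
  proof -
    obtain s where "s < P m" "\<And>t. t \<le> m \<Longrightarrow> (vs ! t) s = c"
      using between_value_position[OF m] c unfolding ab by blast
    then have "s < i" "u s = c"
      unfolding i u by auto
    then show ?thesis
      using inv_f_eq[OF permutes_inj[OF permutes]] u m by fastforce
  qed
  moreover have "c \<noteq> x' \<and> c \<noteq> y'"
    if "a < c" "c < b" "Suc m' < length vs" "kstep n k (vs ! m') (vs ! Suc m') x' y'" for c m' x' y'
    using between_value_never_exchanged[OF m that(3)] exchanged[OF that(3,4)] that(1,2) ab by auto
  ultimately show ?thesis by blast
qed

end
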